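(* (1) For every fixed integer $d\ge 3$ there is a constant $C_d$ such that $m^*(n,d)\le C_d(\log_2 n)^{\lfloor\log_2 d\rfloor}$ for all integers $n\ge 2$; that is, $m^*(n,d)=O\big(\log_2^{\lfloor \log_2 d\rfloor} n\big)$. (2) For every integer $n\ge 3$, $m^*(n,3)\le 2\lceil\log_2 n\rceil-1$.
   Context: For a binary matrix $M$ and a nonempty set $S$ of its columns, $S$ is a stopping set if the submatrix formed by $S$ has no row with exactly one $1$; $s(M)$ is the minimum size of a stopping set ($+\infty$ if none). $M$ is $d$-decodable if $s(M)\ge d+1$. $m^*(n,d)$ is the minimum $m$ such that an $m\times n$ $d$-decodable binary matrix exists. *)

theory Defs
  imports Complex_Main "HOL-Library.Extended_Nat"
begin

text \<open>An m x n binary matrix is represented as M :: nat \<Rightarrow> nat \<Rightarrow> bool,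
  where M i j (for i < m, j < n) is True iff the entry in row i, column j is 1.
  Entries outside the range are irrelevant.\<close>

definition stopping_set :: "nat \<Rightarrow> nat \<Rightarrow> (nat \<Rightarrow> nat \<Rightarrow> bool) \<Rightarrow> nat set \<Rightarrow> bool" where
  "stopping_set m n M S \<longleftrightarrow> S \<subseteq> {..<n} \<and> S \<noteq> {} \<and>
     (\<forall>i<m. card {j\<in>S. M i j} \<noteq> 1)"

definition stop_dist :: "nat \<Rightarrow> nat \<Rightarrow> (nat \<Rightarrow> nat \<Rightarrow> bool) \<Rightarrow> enat" where
  "stop_dist m n M = Inf {enat (card S) | S. stopping_set m n M S}"

definition decodable :: "nat \<Rightarrow> nat \<Rightarrow> nat \<Rightarrow> (nat \<Rightarrow> nat \<Rightarrow> bool) \<Rightarrow> bool" where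
  "decodable m n d M \<longleftrightarrow> stop_dist m n M \<ge> enat (d + 1)"

definition mstar :: "nat \<Rightarrow> nat \<Rightarrow> nat" where
  "mstar n d = (LEAST m. \<exists>M. decodable m n d M)"

end

theory Submission
  imports Defs
begin

text \<open>Index the columns by L-bit words, where n \<le> 2^L. A set of fewer than 2^(k+1) words can be
  cut down to a single word by at most k bit constraints: split along a bit on which two of its
  words differ and keep the smaller half. So if the rows are the indicators of all subcubes given by
  k constraints, no such set is a stopping set, and d < 2^(k+1) gives (2L)^k rows, that is
  O(log^k n) with k = \<lfloor>log d\<rfloor>. For d = 3 the L bit rows together with the complements of the
  lowest L - 1 bits suffice: in a stopping set of size at most 3 no bit below the top one may split
  the set (one side would be a single word), and then the top bit row or, for a single word, the
  row of bit 0 or of its complement has exactly one 1.\<close>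

lemma mstar_le: "decodable m n d M \<Longrightarrow> mstar n d \<le> m"
  unfolding mstar_def by (rule Least_le) blast

lemma decodableI:
  assumes "\<And>S. stopping_set m n M S \<Longrightarrow> d + 1 \<le> card S"
  shows "decodable m n d M"
  unfolding decodable_def stop_dist_def
  by (rule Inf_greatest) (auto dest: assms)

lemma nat_eq_if_bits_below_eq:
  fixes x y :: nat
  assumes "x < 2 ^ L" "y < 2 ^ L" "\<And>b. b < L \<Longrightarrow> bit x b = bit y b"
  shows "x = y"
  using assms by (metis bit_eq_iff bit_take_bit_iff take_bit_nat_eq_self)

lemma card_filter_add_card_filter_not:
  "finite S \<Longrightarrow> card {s\<in>S. P s} + card {s\<in>S. \<not> P s} = card S"
  by (subst card_Un_disjoint[symmetric]) (auto intro: arg_cong[where f = card])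

definition matches :: "(nat \<times> bool) list \<Rightarrow> nat \<Rightarrow> bool" where
  "matches p s \<longleftrightarrow> (\<forall>(b, v) \<in> set p. bit s b = v)"

lemma isolating_pattern_exists:
  assumes "S \<subseteq> {..<2 ^ L}" "S \<noteq> {}" "card S < 2 ^ Suc k"
  shows "\<exists>p. length p \<le> k \<and> set p \<subseteq> {..<L} \<times> UNIV \<and> card {s\<in>S. matches p s} = 1"
  using assms
proof (induction k arbitrary: S)
  case 0
  then have "finite S" using finite_subset by blast
  with 0 have "0 < card S" by (simp add: card_gt_0_iff)
  with 0 have "card S = 1" by simp
  then show ?case by (intro exI[of _ "[]"]) (simp add: matches_def)
next
  case (Suc k)
  have fin: "finite S" using Suc.prems(1) finite_subset by blast
  show ?case
  proof (cases "card S = 1")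
    case True
    then show ?thesis by (intro exI[of _ "[]"]) (simp add: matches_def)
  next
    case False
    moreover have "0 < card S" using fin Suc.prems(2) by (simp add: card_gt_0_iff)
    ultimately have "\<not> card S \<le> Suc 0" by simp
    then obtain x y where xy: "x \<in> S" "y \<in> S" "x \<noteq> y"
      using card_le_Suc0_iff_eq[OF fin] by blast
    then obtain b where b: "b < L" "bit x b \<noteq> bit y b"
      using nat_eq_if_bits_below_eq[of x L y] Suc.prems(1) by blast
    define half where "half v = {s\<in>S. bit s b = v}" for v
    have "card (half True) + card (half False) = card S"
      unfolding half_def using card_filter_add_card_filter_not[OF fin] by simp
    then have "card (half True) < 2 ^ Suc k \<or> card (half False) < 2 ^ Suc k"
      using Suc.prems(3) by (simp only: power_Suc) linarith
    then obtain v where v: "card (half v) < 2 ^ Suc k" by blast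
    have "half v \<noteq> {}" "half v \<subseteq> {..<2 ^ L}"
      unfolding half_def using xy b Suc.prems(1) by (cases v; cases "bit x b"; auto)+
    then obtain p where p: "length p \<le> k" "set p \<subseteq> {..<L} \<times> UNIV"
        "card {s\<in>half v. matches p s} = 1"
      using Suc.IH v by blast
    have "{s\<in>S. matches ((b, v) # p) s} = {s\<in>half v. matches p s}"
      unfolding half_def matches_def by auto
    with p b show ?thesis by (intro exI[of _ "(b, v) # p"]) auto
  qed
qed

text \<open>A shorter isolating pattern is padded to length k with a constraint that its isolated
  word satisfies.\<close>

lemma mstar_le_pattern_count:
  assumes "n \<le> 2 ^ L" "0 < L" "d < 2 ^ Suc k"
  shows "mstar n d \<le> (2 * L) ^ k"
proof -
  define R where "R = {p. set p \<subseteq> {..<L} \<times> (UNIV :: bool set) \<and> length p = k}"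
  have "card R = (2 * L) ^ k"
    unfolding R_def by (simp add: card_lists_length_eq card_cartesian_product)
  moreover have "finite R" unfolding R_def by (simp add: finite_lists_length_eq)
  then obtain row where row: "bij_betw row {0..<card R} R"
    using ex_bij_betw_nat_finite by blast
  define M where "M i j = matches (row i) j" for i j
  have "decodable (card R) n d M"
  proof (rule decodableI, rule ccontr)
    fix S assume stop: "stopping_set (card R) n M S" and small: "\<not> d + 1 \<le> card S"
    have "S \<subseteq> {..<2 ^ L}" "S \<noteq> {}" "card S < 2 ^ Suc k"
      using stop small assms unfolding stopping_set_def by auto
    then obtain p where p: "length p \<le> k" "set p \<subseteq> {..<L} \<times> UNIV"
        "card {s\<in>S. matches p s} = 1"
      using isolating_pattern_exists by blast
    then obtain s where s: "{s'\<in>S. matches p s'} = {s}" by (meson card_1_singletonE)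
    define q where "q = p @ replicate (k - length p) (0, bit s 0)"
    have "q \<in> R" unfolding R_def q_def using p assms(2) by auto
    then obtain i where i: "i < card R" "row i = q"
      using row unfolding bij_betw_def by (metis atLeastLessThan_iff imageE)
    have "matches q s" "matches q s' \<Longrightarrow> matches p s'" for s'
      using s unfolding q_def matches_def by auto
    then have "{j\<in>S. M i j} = {s}" using s i(2) unfolding M_def by blast
    then show False using stop i(1) unfolding stopping_set_def by auto
  qed
  ultimately show ?thesis by (metis mstar_le)
qed

definition bits_and_complements :: "nat \<Rightarrow> nat \<Rightarrow> nat \<Rightarrow> bool" where
  "bits_and_complements L i j \<longleftrightarrow> (if i < L then bit j i else \<not> bit j (i - L))"

lemma card_eq_1_if_split_small:
  assumes "finite S" "card S \<le> 3" "\<exists>x\<in>S. P x" "\<exists>y\<in>S. \<not> P y"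
  shows "card {s\<in>S. P s} = 1 \<or> card {s\<in>S. \<not> P s} = 1"
proof -
  have "card {s\<in>S. P s} \<noteq> 0" "card {s\<in>S. \<not> P s} \<noteq> 0"
    using assms by (auto simp: card_eq_0_iff)
  with card_filter_add_card_filter_not[OF assms(1), of P] assms(2) show ?thesis by linarith
qed

lemma bits_and_complements_decodable:
  assumes "n \<le> 2 ^ L" "2 \<le> L"
  shows "decodable (2 * L - 1) n 3 (bits_and_complements L)"
proof (rule decodableI, rule ccontr)
  fix S assume stop: "stopping_set (2 * L - 1) n (bits_and_complements L) S"
    and small: "\<not> 3 + 1 \<le> card S"
  have words: "S \<subseteq> {..<2 ^ L}" and "S \<noteq> {}"
    using stop assms(1) unfolding stopping_set_def by auto
  have fin: "finite S" using words finite_subset by blast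
  have row: "card {j\<in>S. bits_and_complements L i j} \<noteq> 1" if "i < 2 * L - 1" for i
    using stop that unfolding stopping_set_def by auto
  have low_bits_const: "bit x b = bit y b" if "x \<in> S" "y \<in> S" "b < L - 1" for x y b
  proof (rule ccontr)
    assume "bit x b \<noteq> bit y b"
    then have "\<exists>u\<in>S. bit u b" "\<exists>u\<in>S. \<not> bit u b"
      using that(1,2) by metis+
    then have "card {s\<in>S. bit s b} = 1 \<or> card {s\<in>S. \<not> bit s b} = 1"
      using card_eq_1_if_split_small[OF fin] small by simp
    moreover have "{s\<in>S. bit s b} = {s\<in>S. bits_and_complements L b s}"
      "{s\<in>S. \<not> bit s b} = {s\<in>S. bits_and_complements L (L + b) s}"
      using that(3) unfolding bits_and_complements_def by auto
    ultimately show False using row[of b] row[of "L + b"] that(3) by auto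
  qed
  have top_class_le_1: "card {s\<in>S. bit s (L - 1) = v} \<le> 1" for v
  proof -
    have "x = y" if "x \<in> S" "y \<in> S" "bit x (L - 1) = v" "bit y (L - 1) = v" for x y
    proof (rule nat_eq_if_bits_below_eq[of x L y])
      fix b assume "b < L"
      then show "bit x b = bit y b"
        using that low_bits_const[of x y b] by (cases "b = L - 1") auto
    qed (use that words in auto)
    then show ?thesis using fin by (auto simp: card_le_Suc0_iff_eq)
  qed
  have "{s\<in>S. bit s (L - 1)} = {s\<in>S. bits_and_complements L (L - 1) s}"
    using assms(2) unfolding bits_and_complements_def by auto
  then have "{s\<in>S. bit s (L - 1)} = {}"
    using row[of "L - 1"] top_class_le_1[of True] assms(2) by (auto simp: le_Suc_eq card_eq_0_iff fin)
  then have "S = {s\<in>S. bit s (L - 1) = False}" by auto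
  then have "card S = 1"
    using top_class_le_1[of False] \<open>S \<noteq> {}\<close> fin by (simp add: le_Suc_eq card_eq_0_iff)
  then obtain x where S: "S = {x}" by (rule card_1_singletonE)
  then have "{j\<in>S. bits_and_complements L (if bit x 0 then 0 else L) j} = {x}"
    using assms(2) unfolding bits_and_complements_def by auto
  moreover have "(if bit x 0 then 0 else L) < 2 * L - 1" using assms(2) by auto
  ultimately show False using row by fastforce
qed

lemma le_2_pow_ceiling_log:
  assumes "1 \<le> n"
  shows "n \<le> 2 ^ nat \<lceil>log 2 (real n)\<rceil>"
proof -
  have "real n = 2 powr log 2 (real n)" using assms by simp
  also have "\<dots> \<le> 2 powr real (nat \<lceil>log 2 (real n)\<rceil>)"
    by (rule powr_mono) linarith+
  also have "\<dots> = real (2 ^ nat \<lceil>log 2 (real n)\<rceil>)" by (simp add: powr_realpow)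
  finally show ?thesis by (simp only: of_nat_le_iff)
qed

lemma less_2_pow_Suc_floor_log:
  assumes "1 \<le> d"
  shows "d < 2 ^ Suc (nat \<lfloor>log 2 (real d)\<rfloor>)"
proof -
  have "\<lfloor>log 2 (real d)\<rfloor> = int (nat \<lfloor>log 2 (real d)\<rfloor>)" using assms by simp
  then show ?thesis
    using floor_log_nat_eq_powr_iff[of 2 d "nat \<lfloor>log 2 (real d)\<rfloor>"] assms by simp
qed

lemma mstar_le_log_power:
  assumes "2 \<le> n" "d < 2 ^ Suc k"
  shows "real (mstar n d) \<le> 4 ^ k * log 2 (real n) ^ k"
proof -
  define L where "L = nat \<lceil>log 2 (real n)\<rceil>"
  have log_ge_1: "1 \<le> log 2 (real n)" using assms(1) by simp
  then have "0 < L" "real L \<le> log 2 (real n) + 1" unfolding L_def by linarith+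
  have "n \<le> 2 ^ L" using le_2_pow_ceiling_log assms(1) unfolding L_def by simp
  then have "mstar n d \<le> (2 * L) ^ k" using \<open>0 < L\<close> assms(2) by (rule mstar_le_pattern_count)
  then have "real (mstar n d) \<le> real (2 * L) ^ k" by (metis of_nat_le_iff of_nat_power)
  also have "\<dots> \<le> (4 * log 2 (real n)) ^ k"
    using \<open>real L \<le> log 2 (real n) + 1\<close> log_ge_1 by (intro power_mono) auto
  finally show ?thesis by (simp add: power_mult_distrib)
qed

theorem theorem5p2:
  shows "(\<forall>d::nat. d \<ge> 3 \<longrightarrow> (\<exists>C::real. \<forall>n::nat. n \<ge> 2 \<longrightarrow>
            real (mstar n d) \<le> C * (log 2 (real n)) ^ (nat \<lfloor>log 2 (real d)\<rfloor>)))
       \<and> (\<forall>n::nat. n \<ge> 3 \<longrightarrow> mstar n 3 \<le> 2 * nat \<lceil>log 2 (real n)\<rceil> - 1)"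
proof (intro conjI allI impI)
  fix d :: nat assume "d \<ge> 3"
  then have "d < 2 ^ Suc (nat \<lfloor>log 2 (real d)\<rfloor>)" by (intro less_2_pow_Suc_floor_log) simp
  then show "\<exists>C::real. \<forall>n::nat. n \<ge> 2 \<longrightarrow>
      real (mstar n d) \<le> C * (log 2 (real n)) ^ (nat \<lfloor>log 2 (real d)\<rfloor>)"
    using mstar_le_log_power by blast
next
  fix n :: nat assume "n \<ge> 3"
  moreover have "1 < log 2 (real n)" using \<open>n \<ge> 3\<close> by simp
  ultimately have "n \<le> 2 ^ nat \<lceil>log 2 (real n)\<rceil>" "2 \<le> nat \<lceil>log 2 (real n)\<rceil>"
    using le_2_pow_ceiling_log[of n] by linarith+
  then show "mstar n 3 \<le> 2 * nat \<lceil>log 2 (real n)\<rceil> - 1"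
    by (rule mstar_le[OF bits_and_complements_decodable])
qed

end
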